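(* Let $q$ be a prime power, $n\ge 2$, $K=\mathbb{F}_{q^n}$, $d=\frac{q^n-1}{q-1}$. The function fields $E_{1,\mathrm{Kum}}=K(x,y)$ with $y^d=s_{n,1}(x)$ and $E_{n-1,\mathrm{Kum}}=K(x,y)$ with $y^d=s_{n,n-1}(x)$ are both isomorphic over $K$ to the trace-norm function field $E_n=K(x,y)$ with $y^{q^{n-1}}+\dots+y^q+y=x^{1+q+\dots+q^{n-1}}$.
   Context: For a prime power $q$ and integers $n\ge 1$, $0\le i\le n$, the $i$-th $(n,q)$-elementary symmetric polynomial is $s_{n,i}(t)=\sum_{0\le j_1<\dots<j_i\le n-1} t^{q^{j_1}+\dots+q^{j_i}}\in\mathbb{F}_p[t]$; $s_{n,1}$ is the trace $\sum_{j=0}^{n-1}t^{q^j}$. *)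

theory Defs
  imports "HOL-Algebra.QuotRing" "HOL-Computational_Algebra.Polynomial"
          "HOL-Computational_Algebra.Fraction_Field"
begin

definition sym_qpoly :: "nat \<Rightarrow> nat \<Rightarrow> nat \<Rightarrow> 'k::field poly" where
  "sym_qpoly q n i = (\<Sum>J\<in>{J. J \<subseteq> {0..<n} \<and> card J = i}. monom 1 (\<Sum>j\<in>J. q ^ j))"

text \<open>Rational function field K(x) is 'k poly fract; x is the image of [:0,1:].
  A plane curve F(x,y) = 0 is given as a polynomial in y over K(x).\<close>
definition const_rf :: "'k::field poly \<Rightarrow> 'k poly fract poly" where
  "const_rf p = [: Fract p 1 :]"

definition poly_ring :: "'a::comm_ring_1 poly ring" where
  "poly_ring = \<lparr>carrier = UNIV, monoid.mult = (*), one = 1, zero = 0, add = (+)\<rparr>"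

definition function_field :: "'k::field poly fract poly \<Rightarrow> 'k poly fract poly set ring" where
  "function_field F = poly_ring Quot (PIdl\<^bsub>poly_ring\<^esub> F)"

definition ff_const :: "'k::field poly fract poly \<Rightarrow> 'k \<Rightarrow> 'k poly fract poly set" where
  "ff_const F c = (PIdl\<^bsub>poly_ring\<^esub> F) +>\<^bsub>poly_ring\<^esub> const_rf [:c:]"

definition ff_iso_over_K :: "'k::field poly fract poly \<Rightarrow> 'k poly fract poly \<Rightarrow> bool" where
  "ff_iso_over_K F G \<longleftrightarrow> (\<exists>h \<in> ring_iso (function_field F) (function_field G).
       \<forall>c. h (ff_const F c) = ff_const G c)"

definition kummer_curve :: "nat \<Rightarrow> 'k::field poly \<Rightarrow> 'k poly fract poly" where
  "kummer_curve d s = monom 1 d - const_rf s"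

definition trace_norm_curve :: "nat \<Rightarrow> nat \<Rightarrow> 'k::field poly fract poly" where
  "trace_norm_curve q n = (\<Sum>j<n. monom 1 (q ^ j)) - const_rf (monom 1 (\<Sum>j<n. q ^ j))"

end

theory Submission
  imports Defs "HOL-Number_Theory.Cong" "HOL-Computational_Algebra.Polynomial_Factorial"
begin

(* Both isomorphisms are explicit changes of variables, with d = 1 + q + ... + q^(n-1).
  The swap (x, y) -> (y, x) turns y^d = s_{n,1}(x) into the trace-norm equation
  s_{n,1}(y) = x^d, and the inversion (x, y) -> (1/x, y/x) turns y^d = s_{n,n-1}(x) into
  y^d = s_{n,1}(x), because s_{n,n-1}(x) = x^d s_{n,1}(1/x).

  A change of variables is realised as a map K(x)[y] -> K(x)[y] that is a ring homomorphism
  modulo the target equation G. On K(x) it is defined through fractions, which needs the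
  images of nonzero polynomials in x to be units modulo G. For the inversion they are nonzero
  constants. For the swap, c(x) is sent to c(y), and this is where the finiteness of K enters:
  by the pigeonhole principle c divides a^j - a^i for some i <> j, so modulo G = a(y) - b(x)
  a multiple of c(y) is congruent to b(x)^j - b(x)^i, a nonzero element of K(x).
  Two such maps that are mutually inverse on x and y induce inverse K-isomorphisms of the
  quotient rings. *)

section \<open>Ring homomorphisms modulo an element\<close>

lemma eq_cong_trans [trans]: "a = b \<Longrightarrow> [b = c] (mod m) \<Longrightarrow> [a = c] (mod m)"
  and cong_eq_trans [trans]: "[a = b] (mod m) \<Longrightarrow> b = c \<Longrightarrow> [a = c] (mod m)"
  by simp_all

definition hom_mod :: "'a \<Rightarrow> ('b::comm_ring_1 \<Rightarrow> 'a::unique_euclidean_ring) \<Rightarrow> bool"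
where
  "hom_mod G \<Phi> \<longleftrightarrow> (\<forall>a b. [\<Phi> (a + b) = \<Phi> a + \<Phi> b] (mod G))
     \<and> (\<forall>a b. [\<Phi> (a * b) = \<Phi> a * \<Phi> b] (mod G)) \<and> [\<Phi> 1 = 1] (mod G)"

lemma hom_mod_add: "hom_mod G \<Phi> \<Longrightarrow> [\<Phi> (a + b) = \<Phi> a + \<Phi> b] (mod G)"
  and hom_mod_mult: "hom_mod G \<Phi> \<Longrightarrow> [\<Phi> (a * b) = \<Phi> a * \<Phi> b] (mod G)"
  and hom_mod_1: "hom_mod G \<Phi> \<Longrightarrow> [\<Phi> 1 = 1] (mod G)"
  by (simp_all add: hom_mod_def)

lemma hom_mod_diff:
  assumes "hom_mod G \<Phi>" shows "[\<Phi> (a - b) = \<Phi> a - \<Phi> b] (mod G)"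
proof -
  have "[\<Phi> (a - b) + \<Phi> b = \<Phi> a] (mod G)"
    using cong_sym[OF hom_mod_add[OF assms, of "a - b" b]] by simp
  then show ?thesis by (simp add: cong_iff_dvd_diff algebra_simps)
qed

lemma hom_mod_0: "hom_mod G \<Phi> \<Longrightarrow> [\<Phi> 0 = 0] (mod G)"
  using hom_mod_diff[of G \<Phi> 0 0] by simp

lemma hom_mod_power:
  assumes "hom_mod G \<Phi>" shows "[\<Phi> (a ^ n) = \<Phi> a ^ n] (mod G)"
proof (induction n)
  case 0
  show ?case using hom_mod_1[OF assms] by simp
next
  case (Suc n)
  have "[\<Phi> (a * a ^ n) = \<Phi> a * \<Phi> (a ^ n)] (mod G)" by (rule hom_mod_mult[OF assms])
  also have "[\<Phi> a * \<Phi> (a ^ n) = \<Phi> a * \<Phi> a ^ n] (mod G)" by (intro cong_mult cong_refl Suc.IH)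
  finally show ?case by simp
qed

lemma hom_mod_cong:
  fixes \<Phi> :: "'b::unique_euclidean_ring \<Rightarrow> 'a::unique_euclidean_ring"
  assumes hom: "hom_mod G \<Phi>" and F: "[\<Phi> F = 0] (mod G)" and ab: "[a = b] (mod F)"
  shows "[\<Phi> a = \<Phi> b] (mod G)"
proof -
  obtain r where r: "a - b = F * r" using ab by (auto simp: cong_iff_dvd_diff elim: dvdE)
  have "[\<Phi> a - \<Phi> b = \<Phi> (F * r)] (mod G)" using cong_sym[OF hom_mod_diff[OF hom, of a b]] r by simp
  also have "[\<Phi> (F * r) = \<Phi> F * \<Phi> r] (mod G)" by (rule hom_mod_mult[OF hom])
  also have "[\<Phi> F * \<Phi> r = 0 * \<Phi> r] (mod G)" by (intro cong_mult F cong_refl)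
  finally show ?thesis by (simp add: cong_iff_dvd_diff)
qed

lemma hom_mod_comp:
  fixes \<Phi> :: "'c::comm_ring_1 \<Rightarrow> 'b::unique_euclidean_ring"
    and \<Psi> :: "'b \<Rightarrow> 'a::unique_euclidean_ring"
  assumes \<Phi>: "hom_mod G \<Phi>" and \<Psi>: "hom_mod H \<Psi>" and G: "[\<Psi> G = 0] (mod H)"
  shows "hom_mod H (\<Psi> \<circ> \<Phi>)"
  unfolding hom_mod_def comp_def
proof (intro conjI allI)
  fix a b
  have "[\<Psi> (\<Phi> (a + b)) = \<Psi> (\<Phi> a + \<Phi> b)] (mod H)"
    by (rule hom_mod_cong[OF \<Psi> G hom_mod_add[OF \<Phi>]])
  also have "[\<Psi> (\<Phi> a + \<Phi> b) = \<Psi> (\<Phi> a) + \<Psi> (\<Phi> b)] (mod H)"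
    by (rule hom_mod_add[OF \<Psi>])
  finally show "[\<Psi> (\<Phi> (a + b)) = \<Psi> (\<Phi> a) + \<Psi> (\<Phi> b)] (mod H)" .
  have "[\<Psi> (\<Phi> (a * b)) = \<Psi> (\<Phi> a * \<Phi> b)] (mod H)"
    by (rule hom_mod_cong[OF \<Psi> G hom_mod_mult[OF \<Phi>]])
  also have "[\<Psi> (\<Phi> a * \<Phi> b) = \<Psi> (\<Phi> a) * \<Psi> (\<Phi> b)] (mod H)"
    by (rule hom_mod_mult[OF \<Psi>])
  finally show "[\<Psi> (\<Phi> (a * b)) = \<Psi> (\<Phi> a) * \<Psi> (\<Phi> b)] (mod H)" .
next
  have "[\<Psi> (\<Phi> 1) = \<Psi> 1] (mod H)" by (rule hom_mod_cong[OF \<Psi> G hom_mod_1[OF \<Phi>]])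
  also have "[\<Psi> 1 = 1] (mod H)" by (rule hom_mod_1[OF \<Psi>])
  finally show "[\<Psi> (\<Phi> 1) = 1] (mod H)" .
qed

lemma hom_mod_poly_map_poly:
  fixes \<phi> :: "'b::comm_ring_1 \<Rightarrow> 'a::unique_euclidean_ring"
  assumes \<phi>: "hom_mod G \<phi>" and \<phi>_0: "\<phi> 0 = 0"
  shows "hom_mod G (\<lambda>P. poly (map_poly \<phi> P) Y)"
proof -
  define \<Phi> where "\<Phi> P = poly (map_poly \<phi> P) Y" for P
  have \<Phi>_pCons: "\<Phi> (pCons c P) = \<phi> c + Y * \<Phi> P" for c P
    by (simp add: \<Phi>_def map_poly_pCons \<phi>_0)
  have add: "[\<Phi> (P + Q) = \<Phi> P + \<Phi> Q] (mod G)" for P Q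
  proof (induction P Q rule: poly_induct2)
    case (pCons a p b q)
    have "[\<phi> (a + b) + Y * \<Phi> (p + q) = (\<phi> a + \<phi> b) + Y * (\<Phi> p + \<Phi> q)] (mod G)"
      by (intro cong_add cong_mult cong_refl hom_mod_add[OF \<phi>] pCons.IH)
    then show ?case by (simp add: \<Phi>_pCons algebra_simps)
  qed (simp add: \<Phi>_def)
  have smult: "[\<Phi> (smult c Q) = \<phi> c * \<Phi> Q] (mod G)" for c Q
  proof (induction Q)
    case (pCons a p)
    have "[\<phi> (c * a) + Y * \<Phi> (smult c p) = \<phi> c * \<phi> a + Y * (\<phi> c * \<Phi> p)] (mod G)"
      by (intro cong_add cong_mult cong_refl hom_mod_mult[OF \<phi>] pCons.IH)
    then show ?case by (simp add: \<Phi>_pCons algebra_simps)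
  qed (simp add: \<Phi>_def)
  have mult: "[\<Phi> (P * Q) = \<Phi> P * \<Phi> Q] (mod G)" for P Q
  proof (induction P)
    case (pCons a p)
    have "[\<Phi> (smult a Q + pCons 0 (p * Q)) = \<Phi> (smult a Q) + \<Phi> (pCons 0 (p * Q))] (mod G)"
      by (rule add)
    also have "[\<Phi> (smult a Q) + \<Phi> (pCons 0 (p * Q)) = \<phi> a * \<Phi> Q + Y * (\<Phi> p * \<Phi> Q)] (mod G)"
      using pCons.IH by (simp add: \<Phi>_pCons \<phi>_0) (intro cong_add cong_mult cong_refl smult)
    finally show ?case by (simp add: \<Phi>_pCons algebra_simps)
  qed (simp add: \<Phi>_def)
  have "[\<Phi> 1 = 1] (mod G)"
    using hom_mod_1[OF \<phi>] by (simp add: \<Phi>_def map_poly_pCons \<phi>_0 flip: pCons_one)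
  with add mult show ?thesis unfolding hom_mod_def \<Phi>_def by blast
qed

lemma cong_pcompose: "[B = C] (mod G) \<Longrightarrow> [pcompose P B = pcompose P C] (mod G)"
  by (induction P) (simp_all add: pcompose_pCons cong_add cong_mult)

section \<open>Function fields as quotient rings\<close>

lemma cring_poly_ring: "cring (poly_ring :: 'a::comm_ring_1 poly ring)"
  unfolding poly_ring_def
proof (rule cringI)
  show "abelian_group \<lparr>carrier = UNIV, monoid.mult = (*), one = 1::'a poly, zero = 0, add = (+)\<rparr>"
    by (rule abelian_groupI) (auto intro: left_minus)
  show "Group.comm_monoid \<lparr>carrier = UNIV, monoid.mult = (*), one = 1::'a poly, zero = 0, add = (+)\<rparr>"
    by (simp add: Group.monoid.intro monoid.monoid_comm_monoidI)
qed (auto simp: distrib_right)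

definition ff_class :: "'k::field poly fract poly \<Rightarrow> 'k poly fract poly \<Rightarrow> 'k poly fract poly set" where
  "ff_class F a = PIdl\<^bsub>poly_ring\<^esub> F +>\<^bsub>poly_ring\<^esub> a"

lemma ff_class_eq_iff: "ff_class F a = ff_class F b \<longleftrightarrow> [a = b] (mod F)"
proof -
  have ff_class: "ff_class F a = {c. [c = a] (mod F)}" for a
    unfolding ff_class_def cgenideal_def a_r_coset_def r_coset_def poly_ring_def
    by (auto simp: cong_iff_dvd_diff dvd_def algebra_simps)
  show ?thesis
    unfolding ff_class by (auto intro: cong_sym cong_trans)
qed

lemma carrier_function_field: "carrier (function_field F) = range (ff_class F)"
  unfolding function_field_def FactRing_def ff_class_def A_RCOSETS_def RCOSETS_def a_r_coset_def
  by (auto simp: poly_ring_def)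

lemma
  fixes F :: "'k::field poly fract poly"
  shows ff_class_add: "ff_class F a \<oplus>\<^bsub>function_field F\<^esub> ff_class F b = ff_class F (a + b)"
    and ff_class_mult: "ff_class F a \<otimes>\<^bsub>function_field F\<^esub> ff_class F b = ff_class F (a * b)"
    and ff_class_1: "\<one>\<^bsub>function_field F\<^esub> = ff_class F 1"
proof -
  interpret ideal "PIdl\<^bsub>poly_ring\<^esub> F" "poly_ring :: 'k poly fract poly ring"
    by (rule cring.cgenideal_ideal[OF cring_poly_ring]) (simp add: poly_ring_def)
  show "ff_class F a \<oplus>\<^bsub>function_field F\<^esub> ff_class F b = ff_class F (a + b)"
    "ff_class F a \<otimes>\<^bsub>function_field F\<^esub> ff_class F b = ff_class F (a * b)"
    "\<one>\<^bsub>function_field F\<^esub> = ff_class F 1"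
    using ring_hom_add[OF rcos_ring_hom, of a b] ring_hom_mult[OF rcos_ring_hom, of a b]
      ring_hom_one[OF rcos_ring_hom]
    unfolding function_field_def ff_class_def by (simp_all add: poly_ring_def)
qed

lemma ff_iso_over_KI:
  fixes F G :: "'k::field poly fract poly"
  assumes hom: "hom_mod G \<Phi>"
    and cong_iff: "\<And>a b. [\<Phi> a = \<Phi> b] (mod G) \<longleftrightarrow> [a = b] (mod F)"
    and surj: "\<And>b. \<exists>a. [\<Phi> a = b] (mod G)"
    and const: "\<And>c. [\<Phi> (const_rf [:c:]) = const_rf [:c:]] (mod G)"
  shows "ff_iso_over_K F G"
proof -
  define h where "h X = ff_class G (\<Phi> (SOME a. X = ff_class F a))" for X
  have h: "h (ff_class F a) = ff_class G (\<Phi> a)" for a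
  proof -
    have "ff_class F (SOME b. ff_class F a = ff_class F b) = ff_class F a"
      by (rule someI_ex[where P = "\<lambda>b. ff_class F a = ff_class F b", symmetric]) auto
    then show ?thesis by (simp add: h_def ff_class_eq_iff cong_iff)
  qed
  have "h \<in> ring_iso (function_field F) (function_field G)"
  proof (rule ring_iso_memI)
    show "bij_betw h (carrier (function_field F)) (carrier (function_field G))"
    proof (rule bij_betw_imageI)
      show "inj_on h (carrier (function_field F))"
        by (auto simp: inj_on_def carrier_function_field h ff_class_eq_iff cong_iff)
      have "ff_class G b \<in> range (\<lambda>a. h (ff_class F a))" for b
        using surj[of b] by (metis (no_types, lifting) cong_sym ff_class_eq_iff h rangeI)
      then show "h ` carrier (function_field F) = carrier (function_field G)"
        unfolding carrier_function_field image_image h by auto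
    qed
  next
    show "h x \<in> carrier (function_field G)" if "x \<in> carrier (function_field F)" for x
      using that by (auto simp: carrier_function_field h)
    show "h (x \<otimes>\<^bsub>function_field F\<^esub> y) = h x \<otimes>\<^bsub>function_field G\<^esub> h y"
      if "x \<in> carrier (function_field F)" "y \<in> carrier (function_field F)" for x y
      using that by (clarsimp simp: carrier_function_field h ff_class_mult)
        (simp add: ff_class_eq_iff hom_mod_mult[OF hom])
    show "h (x \<oplus>\<^bsub>function_field F\<^esub> y) = h x \<oplus>\<^bsub>function_field G\<^esub> h y"
      if "x \<in> carrier (function_field F)" "y \<in> carrier (function_field F)" for x y
      using that by (clarsimp simp: carrier_function_field h ff_class_add)
        (simp add: ff_class_eq_iff hom_mod_add[OF hom])
    show "h \<one>\<^bsub>function_field F\<^esub> = \<one>\<^bsub>function_field G\<^esub>"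
      by (simp add: ff_class_1 h ff_class_eq_iff hom_mod_1[OF hom])
  qed
  moreover have "h (ff_const F c) = ff_const G c" for c
    using const[of c] by (simp add: ff_const_def ff_class_def[symmetric] h ff_class_eq_iff)
  ultimately show ?thesis unfolding ff_iso_over_K_def by blast
qed

lemma ff_iso_over_K_trans:
  assumes "ff_iso_over_K F G" and "ff_iso_over_K G H"
  shows "ff_iso_over_K F H"
proof -
  obtain h1 where h1: "h1 \<in> ring_iso (function_field F) (function_field G)"
    "\<forall>c. h1 (ff_const F c) = ff_const G c"
    using assms(1) unfolding ff_iso_over_K_def by blast
  obtain h2 where h2: "h2 \<in> ring_iso (function_field G) (function_field H)"
    "\<forall>c. h2 (ff_const G c) = ff_const H c"
    using assms(2) unfolding ff_iso_over_K_def by blast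
  have "h2 \<circ> h1 \<in> ring_iso (function_field F) (function_field H)"
    by (rule ring_iso_set_trans[OF h1(1) h2(1)])
  with h1(2) h2(2) show ?thesis unfolding ff_iso_over_K_def by (intro bexI[of _ "h2 \<circ> h1"]) auto
qed

section \<open>Polynomials in y with coefficients in K\<close>

definition poly_y :: "'k::field poly \<Rightarrow> 'k poly fract poly" where
  "poly_y p = map_poly (\<lambda>c. to_fract [:c:]) p"

(* In K(x)[y] the variables are x = const_rf [:0, 1:] and y = [:0, 1:]; rf_x is x in K(x). *)

abbreviation rf_x :: "'k::field poly fract" where
  "rf_x \<equiv> to_fract [:0, 1:]"

lemma const_rf_conv_to_fract: "const_rf p = [:to_fract p:]"
  by (simp add: const_rf_def to_fract_def)

lemma const_rf_diff: "const_rf (p - q) = const_rf p - const_rf q"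
  by (simp add: const_rf_conv_to_fract)

lemma const_rf_mult: "const_rf (p * q) = const_rf p * const_rf q"
  by (simp add: const_rf_conv_to_fract)

lemma const_rf_power: "const_rf (p ^ n) = const_rf p ^ n"
  by (induction n) (simp_all add: const_rf_mult, simp add: const_rf_conv_to_fract pCons_one)

lemma const_poly_power: "[:c:] ^ n = [:c ^ n:]"
  by (induction n) (simp_all add: pCons_one power_commutes)

lemma poly_y_0 [simp]: "poly_y 0 = 0"
  by (simp add: poly_y_def)

lemma coeff_poly_y: "coeff (poly_y p) n = to_fract [:coeff p n:]"
  by (simp add: poly_y_def coeff_map_poly)

lemma degree_poly_y: "degree (poly_y p) = degree p"
  by (simp add: poly_y_def degree_map_poly)

lemma poly_y_pCons: "poly_y (pCons c p) = pCons (to_fract [:c:]) (poly_y p)"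
  by (simp add: poly_y_def map_poly_pCons)

lemma poly_y_add: "poly_y (p + q) = poly_y p + poly_y q"
  by (rule poly_eqI) (simp add: coeff_poly_y flip: to_fract_add)

lemma poly_y_diff: "poly_y (p - q) = poly_y p - poly_y q"
  using poly_y_add[of "p - q" q] by simp

lemma poly_y_mult: "poly_y (p * q) = poly_y p * poly_y q"
  by (rule poly_eqI) (simp add: coeff_poly_y coeff_mult mult.commute flip: to_fract_mult sum_to_poly)

lemma poly_y_1: "poly_y 1 = 1"
  by (simp add: poly_y_def pCons_one)

lemma poly_y_power: "poly_y (p ^ n) = poly_y p ^ n"
  by (induction n) (simp_all add: poly_y_1 poly_y_mult)

lemma poly_y_const: "poly_y [:c:] = const_rf [:c:]"
  by (simp add: poly_y_pCons const_rf_conv_to_fract)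

lemma poly_y_x: "poly_y [:0, 1:] = [:0, 1:]"
  by (simp add: poly_y_pCons poly_y_1 pCons_one)

lemma poly_y_monom: "poly_y (monom 1 n) = monom 1 n"
  by (simp add: poly_y_def map_poly_monom pCons_one)

lemma poly_y_sum: "poly_y (\<Sum>i\<in>A. f i) = (\<Sum>i\<in>A. poly_y (f i))"
  by (induction A rule: infinite_finite_induct) (simp_all add: poly_y_add)

lemma reflect_poly_poly_y: "reflect_poly (poly_y p) = poly_y (reflect_poly p)"
  by (rule poly_eqI) (simp add: coeff_reflect_poly coeff_poly_y degree_poly_y)

lemma poly_poly_y_rf_x: "poly (poly_y p) rf_x = to_fract p"
proof (induction p)
  case (pCons c p)
  have "pCons c p = [:c:] + [:0, 1:] * p" by simp
  then have "to_fract (pCons c p) = to_fract [:c:] + rf_x * to_fract p"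
    by (metis to_fract_add to_fract_mult)
  with pCons.IH show ?case by (simp add: poly_y_pCons)
qed (simp add: poly_y_def)

lemma pcompose_poly_y_x: "pcompose (poly_y p) (const_rf [:0, 1:]) = const_rf p"
  by (simp add: const_rf_conv_to_fract pcompose_pCons_0 poly_poly_y_rf_x)

lemma pcompose_poly_y_const: "pcompose (poly_y [:c:]) A = const_rf [:c:]"
  by (simp add: poly_y_const const_rf_def)

section \<open>Homomorphisms of function fields over K\<close>

lemma hom_mod_pcompose_poly_y:
  assumes hom: "hom_mod G \<Phi>" and const: "\<And>c. [\<Phi> (const_rf [:c:]) = const_rf [:c:]] (mod G)"
  shows "[\<Phi> (pcompose (poly_y p) B) = pcompose (poly_y p) (\<Phi> B)] (mod G)"
proof (induction p)
  case 0
  show ?case using hom_mod_0[OF hom] by simp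
next
  case (pCons c p)
  have "pcompose (poly_y (pCons c p)) B = const_rf [:c:] + B * pcompose (poly_y p) B" for B
    by (simp add: poly_y_pCons pcompose_pCons const_rf_conv_to_fract)
  moreover have "[\<Phi> (const_rf [:c:] + B * pcompose (poly_y p) B)
      = const_rf [:c:] + \<Phi> B * pcompose (poly_y p) (\<Phi> B)] (mod G)"
    using cong_trans[OF hom_mod_add[OF hom] cong_add[OF const cong_trans[OF hom_mod_mult[OF hom]
          cong_mult[OF cong_refl pCons.IH]]]] .
  ultimately show ?case by simp
qed

definition ff_hom ::
  "'k::field poly fract poly \<Rightarrow> 'k poly fract poly \<Rightarrow> ('k poly fract poly \<Rightarrow> 'k poly fract poly) \<Rightarrow> bool"
where
  "ff_hom F G \<Phi> \<longleftrightarrow> hom_mod G \<Phi> \<and> [\<Phi> F = 0] (mod G)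
     \<and> (\<forall>c. [\<Phi> (const_rf [:c:]) = const_rf [:c:]] (mod G))"

lemma ff_homI:
  "hom_mod G \<Phi> \<Longrightarrow> [\<Phi> F = 0] (mod G) \<Longrightarrow> (\<And>c. [\<Phi> (const_rf [:c:]) = const_rf [:c:]] (mod G))
    \<Longrightarrow> ff_hom F G \<Phi>"
  by (simp add: ff_hom_def)

lemma ff_hom_cong: "ff_hom F G \<Phi> \<Longrightarrow> [a = b] (mod F) \<Longrightarrow> [\<Phi> a = \<Phi> b] (mod G)"
  unfolding ff_hom_def by (blast intro: hom_mod_cong)

lemma ff_hom_comp:
  assumes \<Phi>: "ff_hom F G \<Phi>" and \<Psi>: "ff_hom G H \<Psi>"
  shows "ff_hom F H (\<Psi> \<circ> \<Phi>)"
proof (rule ff_homI)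
  have \<Phi>': "hom_mod G \<Phi>" "[\<Phi> F = 0] (mod G)" "\<And>c. [\<Phi> (const_rf [:c:]) = const_rf [:c:]] (mod G)"
    and \<Psi>': "hom_mod H \<Psi>" "[\<Psi> G = 0] (mod H)" "\<And>c. [\<Psi> (const_rf [:c:]) = const_rf [:c:]] (mod H)"
    using \<Phi> \<Psi> by (simp_all add: ff_hom_def)
  show "hom_mod H (\<Psi> \<circ> \<Phi>)"
    by (rule hom_mod_comp[OF \<Phi>'(1) \<Psi>'(1,2)])
  show "[(\<Psi> \<circ> \<Phi>) F = 0] (mod H)"
    unfolding comp_def by (rule cong_trans[OF ff_hom_cong[OF \<Psi> \<Phi>'(2)] hom_mod_0[OF \<Psi>'(1)]])
  show "[(\<Psi> \<circ> \<Phi>) (const_rf [:c:]) = const_rf [:c:]] (mod H)" for c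
    unfolding comp_def by (rule cong_trans[OF ff_hom_cong[OF \<Psi> \<Phi>'(3)] \<Psi>'(3)])
qed

lemma ff_hom_cong_id:
  assumes \<chi>: "ff_hom F F \<chi>"
    and x: "[\<chi> (const_rf [:0, 1:]) = const_rf [:0, 1:]] (mod F)"
    and y: "[\<chi> [:0, 1:] = [:0, 1:]] (mod F)"
  shows "[\<chi> P = P] (mod F)"
proof -
  have hom: "hom_mod F \<chi>" and const: "\<And>c. [\<chi> (const_rf [:c:]) = const_rf [:c:]] (mod F)"
    using \<chi> by (simp_all add: ff_hom_def)
  have const_rf: "[\<chi> (const_rf p) = const_rf p] (mod F)" for p
    using cong_trans[OF hom_mod_pcompose_poly_y[OF hom const] cong_pcompose[OF x]]
    by (simp add: pcompose_poly_y_x)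
  have coeff: "[\<chi> [:f:] = [:f:]] (mod F)" for f
  proof -
    obtain p q where f: "f = Fract p q" and q: "q \<noteq> 0" by (cases f)
    define c where "c = [:inverse (to_fract q):]"
    have fq: "[:f:] * const_rf q = const_rf p"
      using q by (simp add: f const_rf_def eq_fract)
    have qc: "const_rf q * c = 1"
      using q by (simp add: c_def const_rf_conv_to_fract)
    have "\<chi> [:f:] = \<chi> [:f:] * const_rf q * c" by (simp add: qc mult.assoc)
    also have "[\<chi> [:f:] * const_rf q * c = \<chi> [:f:] * \<chi> (const_rf q) * c] (mod F)"
      by (intro cong_mult cong_refl cong_sym[OF const_rf])
    also have "[\<chi> [:f:] * \<chi> (const_rf q) * c = \<chi> (const_rf p) * c] (mod F)"
      unfolding fq[symmetric] by (intro cong_mult cong_refl cong_sym[OF hom_mod_mult[OF hom]])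
    also have "[\<chi> (const_rf p) * c = const_rf p * c] (mod F)"
      by (intro cong_mult cong_refl const_rf)
    also have "const_rf p * c = [:f:]"
      by (simp add: fq[symmetric] qc mult.assoc)
    finally show ?thesis .
  qed
  show ?thesis
  proof (induction P)
    case 0
    show ?case by (rule hom_mod_0[OF hom])
  next
    case (pCons c P)
    have "pCons c P = [:c:] + [:0, 1:] * P" by simp
    moreover have "[\<chi> ([:c:] + [:0, 1:] * P) = [:c:] + [:0, 1:] * P] (mod F)"
      using cong_trans[OF hom_mod_add[OF hom] cong_add[OF coeff cong_trans[OF hom_mod_mult[OF hom]
            cong_mult[OF y pCons.IH]]]] .
    ultimately show ?case by simp
  qed
qed

lemma ff_iso_over_K_if_inverse_homs:
  assumes \<Phi>: "ff_hom F G \<Phi>" and \<Psi>: "ff_hom G F \<Psi>"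
    and \<Psi>\<Phi>_xy: "[\<Psi> (\<Phi> (const_rf [:0, 1:])) = const_rf [:0, 1:]] (mod F)"
      "[\<Psi> (\<Phi> [:0, 1:]) = [:0, 1:]] (mod F)"
    and \<Phi>\<Psi>_xy: "[\<Phi> (\<Psi> (const_rf [:0, 1:])) = const_rf [:0, 1:]] (mod G)"
      "[\<Phi> (\<Psi> [:0, 1:]) = [:0, 1:]] (mod G)"
  shows "ff_iso_over_K F G"
proof (rule ff_iso_over_KI)
  have \<Psi>\<Phi>: "[\<Psi> (\<Phi> P) = P] (mod F)" for P
    using ff_hom_cong_id[OF ff_hom_comp[OF \<Phi> \<Psi>]] \<Psi>\<Phi>_xy by simp
  have \<Phi>\<Psi>: "[\<Phi> (\<Psi> P) = P] (mod G)" for P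
    using ff_hom_cong_id[OF ff_hom_comp[OF \<Psi> \<Phi>]] \<Phi>\<Psi>_xy by simp
  show "hom_mod G \<Phi>" and "[\<Phi> (const_rf [:c:]) = const_rf [:c:]] (mod G)" for c
    using \<Phi> by (simp_all add: ff_hom_def)
  show "[\<Phi> a = \<Phi> b] (mod G) \<longleftrightarrow> [a = b] (mod F)" for a b
  proof
    assume "[\<Phi> a = \<Phi> b] (mod G)"
    then have "[\<Psi> (\<Phi> a) = \<Psi> (\<Phi> b)] (mod F)" by (rule ff_hom_cong[OF \<Psi>])
    then show "[a = b] (mod F)" using \<Psi>\<Phi> by (meson cong_sym cong_trans)
  qed (rule ff_hom_cong[OF \<Phi>])
  show "\<exists>a. [\<Phi> a = b] (mod G)" for b
    using \<Phi>\<Psi> by blast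
qed

section \<open>Substitutions\<close>

definition fract_rep :: "'a::idom fract \<Rightarrow> 'a \<times> 'a" where
  "fract_rep f = (SOME ab. snd ab \<noteq> 0 \<and> f = Fract (fst ab) (snd ab))"

lemma fract_rep:
  assumes "fract_rep f = (a, b)"
  shows "b \<noteq> 0" and "f = Fract a b"
proof -
  obtain a' b' where "f = Fract a' b'" "b' \<noteq> 0" by (cases f)
  then have "\<exists>ab. snd ab \<noteq> 0 \<and> f = Fract (fst ab) (snd ab)" by (intro exI[of _ "(a', b')"]) simp
  from someI_ex[OF this] show "b \<noteq> 0" "f = Fract a b"
    using assms by (simp_all add: fract_rep_def)
qed

(* The substitution x -> A, y -> Y modulo G. It is extended from K[x] to K(x) through a chosen
  representing fraction and a chosen inverse modulo G of the image of its denominator; neither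
  choice matters up to congruence. *)

locale subst_mod =
  fixes A Y G :: "'k::field poly fract poly"
  assumes unit_mod: "q \<noteq> 0 \<Longrightarrow> \<exists>u. [pcompose (poly_y q) A * u = 1] (mod G)"
begin

definition inv_mod :: "'k poly \<Rightarrow> 'k poly fract poly" where
  "inv_mod q = (SOME u. [pcompose (poly_y q) A * u = 1] (mod G))"

lemma inv_mod: "q \<noteq> 0 \<Longrightarrow> [pcompose (poly_y q) A * inv_mod q = 1] (mod G)"
  unfolding inv_mod_def by (rule someI_ex) (rule unit_mod)

definition subst_fract :: "'k poly fract \<Rightarrow> 'k poly fract poly" where
  "subst_fract f = pcompose (poly_y (fst (fract_rep f))) A * inv_mod (snd (fract_rep f))"

lemma subst_fract_Fract:
  assumes b: "b \<noteq> 0" and u: "[pcompose (poly_y b) A * u = 1] (mod G)"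
  shows "[subst_fract (Fract a b) = pcompose (poly_y a) A * u] (mod G)"
proof -
  obtain a' b' where rep: "fract_rep (Fract a b) = (a', b')" by fastforce
  have b': "b' \<noteq> 0" and "Fract a b = Fract a' b'"
    using fract_rep[OF rep] by simp_all
  then have cross: "a * b' = a' * b" using b by (simp add: eq_fract)
  have "subst_fract (Fract a b) = pcompose (poly_y a') A * inv_mod b'"
    by (simp add: subst_fract_def rep)
  also have "[\<dots> = pcompose (poly_y a') A * inv_mod b' * (pcompose (poly_y b) A * u)] (mod G)"
    using cong_mult[OF cong_refl cong_sym[OF u]] by simp
  also have "pcompose (poly_y a') A * inv_mod b' * (pcompose (poly_y b) A * u)
      = pcompose (poly_y a) A * u * (pcompose (poly_y b') A * inv_mod b')"
    using arg_cong[OF cross, of "\<lambda>p. pcompose (poly_y p) A"]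
    by (simp add: poly_y_mult pcompose_mult algebra_simps)
  also have "[\<dots> = pcompose (poly_y a) A * u * 1] (mod G)"
    by (intro cong_mult cong_refl inv_mod b')
  finally show ?thesis by simp
qed

lemma subst_fract_to_fract: "[subst_fract (to_fract p) = pcompose (poly_y p) A] (mod G)"
  using subst_fract_Fract[of 1 1 p] by (simp add: to_fract_def poly_y_1 pcompose_1)

lemma subst_fract_0: "subst_fract 0 = 0"
proof -
  obtain a b where rep: "fract_rep (0 :: 'k poly fract) = (a, b)" by fastforce
  then have "a = 0"
    using fract_rep[OF rep] by (simp add: Zero_fract_def eq_fract)
  with rep have "fst (fract_rep (0 :: 'k poly fract)) = 0" by simp
  then show ?thesis by (simp add: subst_fract_def)
qed

lemma subst_fract_Fract_inv_mod:
  "b \<noteq> 0 \<Longrightarrow> [subst_fract (Fract a b) = pcompose (poly_y a) A * inv_mod b] (mod G)"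
  by (rule subst_fract_Fract[OF _ inv_mod])

lemma inv_mod_mult:
  "b \<noteq> 0 \<Longrightarrow> d \<noteq> 0 \<Longrightarrow> [pcompose (poly_y (b * d)) A * (inv_mod b * inv_mod d) = 1] (mod G)"
  using cong_mult[OF inv_mod inv_mod, of b d] by (simp add: poly_y_mult pcompose_mult algebra_simps)

lemma subst_fract_add: "[subst_fract (f + g) = subst_fract f + subst_fract g] (mod G)"
proof -
  obtain a b where f: "f = Fract a b" and b: "b \<noteq> 0" by (cases f)
  obtain c d where g: "g = Fract c d" and d: "d \<noteq> 0" by (cases g)
  let ?A = "\<lambda>p. pcompose (poly_y p) A"
  have sf: "[?A a * inv_mod b = subst_fract f] (mod G)"
    unfolding f by (rule cong_sym[OF subst_fract_Fract_inv_mod[OF b]])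
  have sg: "[?A c * inv_mod d = subst_fract g] (mod G)"
    unfolding g by (rule cong_sym[OF subst_fract_Fract_inv_mod[OF d]])
  have "[subst_fract (f + g) = ?A (a * d + c * b) * (inv_mod b * inv_mod d)] (mod G)"
    using subst_fract_Fract[OF _ inv_mod_mult] b d by (simp add: f g)
  also have "?A (a * d + c * b) * (inv_mod b * inv_mod d)
      = ?A a * inv_mod b * (?A d * inv_mod d) + ?A c * inv_mod d * (?A b * inv_mod b)"
    by (simp add: poly_y_add poly_y_mult pcompose_add pcompose_mult algebra_simps)
  also have "[\<dots> = subst_fract f * 1 + subst_fract g * 1] (mod G)"
    using b d by (intro cong_add cong_mult inv_mod sf sg)
  finally show ?thesis by simp
qed

lemma subst_fract_mult: "[subst_fract (f * g) = subst_fract f * subst_fract g] (mod G)"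
proof -
  obtain a b where f: "f = Fract a b" and b: "b \<noteq> 0" by (cases f)
  obtain c d where g: "g = Fract c d" and d: "d \<noteq> 0" by (cases g)
  let ?A = "\<lambda>p. pcompose (poly_y p) A"
  have sf: "[?A a * inv_mod b = subst_fract f] (mod G)"
    unfolding f by (rule cong_sym[OF subst_fract_Fract_inv_mod[OF b]])
  have sg: "[?A c * inv_mod d = subst_fract g] (mod G)"
    unfolding g by (rule cong_sym[OF subst_fract_Fract_inv_mod[OF d]])
  have "[subst_fract (f * g) = ?A (a * c) * (inv_mod b * inv_mod d)] (mod G)"
    using subst_fract_Fract[OF _ inv_mod_mult] b d by (simp add: f g)
  also have "?A (a * c) * (inv_mod b * inv_mod d) = ?A a * inv_mod b * (?A c * inv_mod d)"
    by (simp add: poly_y_mult pcompose_mult algebra_simps)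
  also have "[\<dots> = subst_fract f * subst_fract g] (mod G)"
    by (intro cong_mult sf sg)
  finally show ?thesis .
qed

lemma hom_mod_subst_fract: "hom_mod G subst_fract"
  using subst_fract_add subst_fract_mult subst_fract_to_fract[of 1]
  by (simp add: hom_mod_def poly_y_1 pcompose_1)

definition subst :: "'k poly fract poly \<Rightarrow> 'k poly fract poly" where
  "subst P = poly (map_poly subst_fract P) Y"

lemma hom_mod_subst: "hom_mod G subst"
  unfolding subst_def[abs_def] by (rule hom_mod_poly_map_poly[OF hom_mod_subst_fract subst_fract_0])

lemma subst_const: "subst [:f:] = subst_fract f"
  by (simp add: subst_def map_poly_pCons subst_fract_0)

lemma subst_const_rf: "[subst (const_rf p) = pcompose (poly_y p) A] (mod G)"
  using subst_fract_to_fract by (simp add: const_rf_conv_to_fract subst_const)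

lemma subst_const_rf_const: "[subst (const_rf [:c:]) = const_rf [:c:]] (mod G)"
  using subst_const_rf[of "[:c:]"] by (simp add: pcompose_poly_y_const)

lemma subst_x: "[subst (const_rf [:0, 1:]) = A] (mod G)"
  using subst_const_rf[of "[:0, 1:]"] by (simp add: poly_y_x pcompose_pCons)

lemma subst_y: "[subst [:0, 1:] = Y] (mod G)"
  using cong_mult[OF cong_refl[of Y] subst_fract_to_fract[of 1]]
  by (simp add: subst_def map_poly_pCons subst_fract_0 poly_y_1 pcompose_1 to_fract_def flip: One_fract_def)

lemma subst_poly_y: "[subst (poly_y p) = pcompose (poly_y p) Y] (mod G)"
  using cong_trans[OF hom_mod_pcompose_poly_y[OF hom_mod_subst subst_const_rf_const]
      cong_pcompose[OF subst_y]]
  by simp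

lemma subst_inverse_x:
  assumes xA: "const_rf [:0, 1:] * A = 1"
  shows "[subst A = const_rf [:0, 1:]] (mod G)"
proof -
  have Ax: "A * const_rf [:0, 1:] = 1"
    using xA by (simp add: mult.commute)
  have "[subst A * A = subst A * subst (const_rf [:0, 1:])] (mod G)"
    by (intro cong_mult cong_refl cong_sym[OF subst_x])
  also have "[subst A * subst (const_rf [:0, 1:]) = subst (A * const_rf [:0, 1:])] (mod G)"
    by (rule cong_sym[OF hom_mod_mult[OF hom_mod_subst]])
  also have "[subst (A * const_rf [:0, 1:]) = 1] (mod G)"
    using hom_mod_1[OF hom_mod_subst] by (simp add: Ax)
  finally have "[subst A * A * const_rf [:0, 1:] = 1 * const_rf [:0, 1:]] (mod G)"
    by (rule cong_mult[OF _ cong_refl])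
  then show ?thesis
    by (simp add: mult.assoc Ax)
qed

end

section \<open>The swap of x and y\<close>

lemma finite_degree_le: "finite {p :: 'a::{zero,finite} poly. degree p \<le> m}"
proof (rule finite_subset)
  show "{p :: 'a poly. degree p \<le> m} \<subseteq> Poly ` {xs. set xs \<subseteq> UNIV \<and> length xs \<le> Suc m}"
  proof
    fix p :: "'a poly"
    assume "p \<in> {p. degree p \<le> m}"
    then have "length (coeffs p) \<le> Suc m"
      by (cases "p = 0") (simp_all add: length_coeffs_degree)
    then show "p \<in> Poly ` {xs. set xs \<subseteq> UNIV \<and> length xs \<le> Suc m}"
      by (intro image_eqI[of _ _ "coeffs p"]) simp_all
  qed
  show "finite (Poly ` {xs :: 'a list. set xs \<subseteq> UNIV \<and> length xs \<le> Suc m})"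
    by (intro finite_imageI finite_lists_length_le) simp
qed

lemma poly_y_unit_mod:
  fixes a b c :: "'k::{field,finite} poly"
  assumes b: "degree b > 0" and c: "c \<noteq> 0"
  shows "\<exists>u. [poly_y c * u = 1] (mod poly_y a - const_rf b)"
proof -
  have "degree (x mod c) \<le> degree c" for x
    using degree_mod_less[OF c, of x] by auto
  then have "range (\<lambda>i. a ^ i mod c) \<subseteq> {r. degree r \<le> degree c}"
    by auto
  then have "finite (range (\<lambda>i. a ^ i mod c))"
    by (rule finite_subset) (rule finite_degree_le)
  then have "\<not> inj (\<lambda>i. a ^ i mod c)"
    using finite_imageD infinite_UNIV_nat by meson
  then obtain i j where "i \<noteq> j" and "a ^ j mod c = a ^ i mod c"
    unfolding inj_def by metis
  then have "c dvd a ^ j - a ^ i"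
    by (simp add: mod_eq_dvd_iff)
  then obtain s where s: "a ^ j - a ^ i = c * s"
    by (rule dvdE)
  define w where "w = to_fract (b ^ j - b ^ i)"
  have "b \<noteq> 0" using b by auto
  then have "degree (b ^ j) \<noteq> degree (b ^ i)"
    using b \<open>i \<noteq> j\<close> by (simp add: degree_power_eq)
  then have "w \<noteq> 0" by (auto simp: w_def)
  have "poly_y c * (poly_y s * [:inverse w:]) = (poly_y a ^ j - poly_y a ^ i) * [:inverse w:]"
    using arg_cong[OF s, of poly_y] by (simp add: poly_y_mult poly_y_power poly_y_diff mult.assoc)
  also have "[\<dots> = (const_rf b ^ j - const_rf b ^ i) * [:inverse w:]] (mod poly_y a - const_rf b)"
    by (intro cong_mult cong_diff cong_pow cong_refl iffD2[OF cong_iff_dvd_diff] dvd_refl)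
  also have "const_rf b ^ j - const_rf b ^ i = [:w:]"
    unfolding w_def const_rf_power[symmetric] const_rf_diff[symmetric] by (rule const_rf_conv_to_fract)
  also have "[:w:] * [:inverse w:] = 1"
    using \<open>w \<noteq> 0\<close> by simp
  finally show ?thesis by blast
qed

lemma ff_hom_swap:
  fixes a b :: "'k::{field,finite} poly"
  assumes "degree a > 0"
  defines "G \<equiv> poly_y b - const_rf a"
  shows "\<exists>\<Phi>. ff_hom (poly_y a - const_rf b) G \<Phi>
    \<and> [\<Phi> (const_rf [:0, 1:]) = [:0, 1:]] (mod G) \<and> [\<Phi> [:0, 1:] = const_rf [:0, 1:]] (mod G)"
proof -
  interpret subst_mod "[:0, 1:]" "const_rf [:0, 1:]" G
    by unfold_locales (simp add: G_def poly_y_unit_mod[OF assms(1)])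
  have "[subst (poly_y a - const_rf b) = const_rf a - poly_y b] (mod G)"
    using cong_trans[OF hom_mod_diff[OF hom_mod_subst] cong_diff[OF subst_poly_y subst_const_rf]]
    by (simp add: pcompose_poly_y_x)
  also have "const_rf a - poly_y b = - G"
    by (simp add: G_def)
  also have "[- G = 0] (mod G)"
    by (simp add: cong_0_iff)
  finally have "ff_hom (poly_y a - const_rf b) G subst"
    by (intro ff_homI hom_mod_subst subst_const_rf_const)
  with subst_x subst_y show ?thesis by blast
qed

lemma ff_iso_over_K_swap:
  fixes a b :: "'k::{field,finite} poly"
  assumes "degree a > 0" and "degree b > 0"
  shows "ff_iso_over_K (poly_y a - const_rf b) (poly_y b - const_rf a)"
proof -
  let ?x = "const_rf [:0, 1:]" and ?y = "[:0, 1:]"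
  obtain \<Phi> where \<Phi>: "ff_hom (poly_y a - const_rf b) (poly_y b - const_rf a) \<Phi>"
    and \<Phi>xy: "[\<Phi> ?x = ?y] (mod poly_y b - const_rf a)" "[\<Phi> ?y = ?x] (mod poly_y b - const_rf a)"
    using ff_hom_swap[OF assms(1)] by blast
  obtain \<Psi> where \<Psi>: "ff_hom (poly_y b - const_rf a) (poly_y a - const_rf b) \<Psi>"
    and \<Psi>xy: "[\<Psi> ?x = ?y] (mod poly_y a - const_rf b)" "[\<Psi> ?y = ?x] (mod poly_y a - const_rf b)"
    using ff_hom_swap[OF assms(2)] by blast
  show ?thesis
  proof (rule ff_iso_over_K_if_inverse_homs[OF \<Phi> \<Psi>])
    show "[\<Psi> (\<Phi> ?x) = ?x] (mod poly_y a - const_rf b)"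
      by (rule cong_trans[OF ff_hom_cong[OF \<Psi> \<Phi>xy(1)] \<Psi>xy(2)])
    show "[\<Psi> (\<Phi> ?y) = ?y] (mod poly_y a - const_rf b)"
      by (rule cong_trans[OF ff_hom_cong[OF \<Psi> \<Phi>xy(2)] \<Psi>xy(1)])
    show "[\<Phi> (\<Psi> ?x) = ?x] (mod poly_y b - const_rf a)"
      by (rule cong_trans[OF ff_hom_cong[OF \<Phi> \<Psi>xy(1)] \<Phi>xy(2)])
    show "[\<Phi> (\<Psi> ?y) = ?y] (mod poly_y b - const_rf a)"
      by (rule cong_trans[OF ff_hom_cong[OF \<Phi> \<Psi>xy(2)] \<Phi>xy(1)])
  qed
qed

section \<open>The inversion of x\<close>

lemma poly_poly_y_inverse_rf_x_nonzero:
  assumes "p \<noteq> 0"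
  shows "poly (poly_y p) (inverse rf_x) \<noteq> 0"
proof
  assume "poly (poly_y p) (inverse rf_x) = 0"
  then have "to_fract (reflect_poly p) = 0"
    using poly_reflect_poly_nz[of rf_x "poly_y p"]
    by (simp add: reflect_poly_poly_y poly_poly_y_rf_x)
  with assms show False by simp
qed

lemma ff_hom_kummer_inversion:
  fixes s t :: "'k::field poly"
  assumes st: "poly (poly_y s) (inverse rf_x) = inverse rf_x ^ d * to_fract t"
  defines "G \<equiv> kummer_curve d t" and "A \<equiv> [:inverse rf_x:]"
  shows "\<exists>\<Phi>. ff_hom (kummer_curve d s) G \<Phi>
    \<and> [\<Phi> (const_rf [:0, 1:]) = A] (mod G) \<and> [\<Phi> A = const_rf [:0, 1:]] (mod G)
    \<and> [\<Phi> [:0, 1:] = A * [:0, 1:]] (mod G) \<and> [\<Phi> (A * [:0, 1:]) = [:0, 1:]] (mod G)"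
proof -
  interpret subst_mod A "A * [:0, 1:]" G
  proof
    fix q :: "'k poly"
    assume "q \<noteq> 0"
    then have "pcompose (poly_y q) A * [:inverse (poly (poly_y q) (inverse rf_x)):] = 1"
      by (simp add: A_def pcompose_pCons_0 poly_poly_y_inverse_rf_x_nonzero)
    then show "\<exists>u. [pcompose (poly_y q) A * u = 1] (mod G)"
      by (metis cong_refl)
  qed
  have xA: "const_rf [:0, 1:] * A = 1"
    by (simp add: A_def const_rf_conv_to_fract)
  have "[subst (monom 1 d) = (A * [:0, 1:]) ^ d] (mod G)"
    using cong_trans[OF hom_mod_power[OF hom_mod_subst] cong_pow[OF subst_y]]
    by (simp add: monom_altdef)
  then have "[subst (kummer_curve d s) = (A * [:0, 1:]) ^ d - pcompose (poly_y s) A] (mod G)"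
    unfolding kummer_curve_def
    using cong_trans[OF hom_mod_diff[OF hom_mod_subst] cong_diff[OF _ subst_const_rf]] by blast
  also have "(A * [:0, 1:]) ^ d - pcompose (poly_y s) A = A ^ d * G"
  proof -
    have "(A * [:0, 1:]) ^ d = A ^ d * monom 1 d"
      by (simp only: power_mult_distrib monom_altdef smult_1_left)
    moreover have "pcompose (poly_y s) A = A ^ d * const_rf t"
      by (simp add: A_def pcompose_pCons_0 st const_poly_power const_rf_conv_to_fract)
    ultimately show ?thesis
      by (simp add: G_def kummer_curve_def right_diff_distrib)
  qed
  also have "[A ^ d * G = 0] (mod G)"
    by (simp add: cong_0_iff)
  finally have "ff_hom (kummer_curve d s) G subst"
    by (intro ff_homI hom_mod_subst subst_const_rf_const)
  moreover have subst_A: "[subst A = const_rf [:0, 1:]] (mod G)"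
    by (rule subst_inverse_x[OF xA])
  moreover have "[subst (A * [:0, 1:]) = [:0, 1:]] (mod G)"
  proof -
    have "[subst (A * [:0, 1:]) = subst A * subst [:0, 1:]] (mod G)"
      by (rule hom_mod_mult[OF hom_mod_subst])
    also have "[subst A * subst [:0, 1:] = const_rf [:0, 1:] * (A * [:0, 1:])] (mod G)"
      by (intro cong_mult subst_y subst_A)
    also have "const_rf [:0, 1:] * (A * [:0, 1:]) = [:0, 1:]"
      by (simp add: xA flip: mult.assoc)
    finally show ?thesis .
  qed
  ultimately show ?thesis using subst_x subst_y by blast
qed

lemma ff_iso_over_K_kummer_inversion:
  fixes s t :: "'k::field poly"
  assumes "poly (poly_y s) (inverse rf_x) = inverse rf_x ^ d * to_fract t"
    and "poly (poly_y t) (inverse rf_x) = inverse rf_x ^ d * to_fract s"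
  shows "ff_iso_over_K (kummer_curve d s) (kummer_curve d t)"
proof -
  let ?x = "const_rf [:0, 1:]" and ?y = "[:0, 1:]" and ?A = "[:inverse rf_x:]"
  obtain \<Phi> where \<Phi>: "ff_hom (kummer_curve d s) (kummer_curve d t) \<Phi>"
    and \<Phi>x: "[\<Phi> ?x = ?A] (mod kummer_curve d t)" "[\<Phi> ?A = ?x] (mod kummer_curve d t)"
    and \<Phi>y: "[\<Phi> ?y = ?A * ?y] (mod kummer_curve d t)" "[\<Phi> (?A * ?y) = ?y] (mod kummer_curve d t)"
    using ff_hom_kummer_inversion[OF assms(1)] by blast
  obtain \<Psi> where \<Psi>: "ff_hom (kummer_curve d t) (kummer_curve d s) \<Psi>"
    and \<Psi>x: "[\<Psi> ?x = ?A] (mod kummer_curve d s)" "[\<Psi> ?A = ?x] (mod kummer_curve d s)"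
    and \<Psi>y: "[\<Psi> ?y = ?A * ?y] (mod kummer_curve d s)" "[\<Psi> (?A * ?y) = ?y] (mod kummer_curve d s)"
    using ff_hom_kummer_inversion[OF assms(2)] by blast
  show ?thesis
  proof (rule ff_iso_over_K_if_inverse_homs[OF \<Phi> \<Psi>])
    show "[\<Psi> (\<Phi> ?x) = ?x] (mod kummer_curve d s)"
      by (rule cong_trans[OF ff_hom_cong[OF \<Psi> \<Phi>x(1)] \<Psi>x(2)])
    show "[\<Psi> (\<Phi> ?y) = ?y] (mod kummer_curve d s)"
      by (rule cong_trans[OF ff_hom_cong[OF \<Psi> \<Phi>y(1)] \<Psi>y(2)])
    show "[\<Phi> (\<Psi> ?x) = ?x] (mod kummer_curve d t)"
      by (rule cong_trans[OF ff_hom_cong[OF \<Phi> \<Psi>x(1)] \<Phi>x(2)])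
    show "[\<Phi> (\<Psi> ?y) = ?y] (mod kummer_curve d t)"
      by (rule cong_trans[OF ff_hom_cong[OF \<Phi> \<Psi>y(1)] \<Phi>y(2)])
  qed
qed

lemma poly_poly_y_monoms_inverse_rf_x:
  assumes "\<And>j. j \<in> J \<Longrightarrow> e j \<le> D"
  shows "poly (poly_y (\<Sum>j\<in>J. monom 1 (e j))) (inverse rf_x)
    = inverse rf_x ^ D * to_fract (\<Sum>j\<in>J. monom 1 (D - e j) :: 'k::field poly)"
proof -
  have "poly (poly_y (\<Sum>j\<in>J. monom 1 (e j))) (inverse rf_x) = (\<Sum>j\<in>J. inverse rf_x ^ e j)"
    by (simp add: poly_y_sum poly_y_monom poly_sum poly_monom)
  also have "\<dots> = (\<Sum>j\<in>J. inverse rf_x ^ D * rf_x ^ (D - e j))"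
  proof (rule sum.cong[OF refl])
    fix j assume "j \<in> J"
    then obtain k where "D = e j + k"
      using assms le_iff_add by blast
    then show "inverse rf_x ^ e j = inverse rf_x ^ D * rf_x ^ (D - e j)"
      by (simp add: power_add mult.assoc flip: power_mult_distrib)
  qed
  also have "\<dots> = inverse rf_x ^ D * poly (poly_y (\<Sum>j\<in>J. monom 1 (D - e j))) rf_x"
    by (simp add: sum_distrib_left poly_y_sum poly_y_monom poly_sum poly_monom)
  also have "\<dots> = inverse rf_x ^ D * to_fract (\<Sum>j\<in>J. monom 1 (D - e j) :: 'k poly)"
    by (simp only: poly_poly_y_rf_x)
  finally show ?thesis .
qed

section \<open>The Kummer and trace-norm curves\<close>

lemma sum_powers_eq_div:
  fixes q :: nat
  assumes "q \<ge> 2"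
  shows "(q ^ n - 1) div (q - 1) = (\<Sum>j<n. q ^ j)"
proof -
  have "int (q ^ n - 1) = int ((q - 1) * (\<Sum>j<n. q ^ j))"
    using power_diff_1_eq[of "int q" n] assms by (simp add: of_nat_diff)
  then have "q ^ n - 1 = (q - 1) * (\<Sum>j<n. q ^ j)"
    by (simp only: of_nat_eq_iff)
  with assms show ?thesis by simp
qed

lemma sym_qpoly_1: "sym_qpoly q n 1 = (\<Sum>j<n. monom 1 (q ^ j))"
proof -
  have "{J. J \<subseteq> {0..<n} \<and> card J = 1} = (\<lambda>j. {j}) ` {..<n}"
    by (auto simp: card_1_singleton_iff)
  then show ?thesis
    unfolding sym_qpoly_def by (simp add: sum.reindex)
qed

lemma sym_qpoly_pred:
  assumes "n \<ge> 1"
  shows "sym_qpoly q n (n - 1) = (\<Sum>k<n. monom 1 ((\<Sum>j<n. q ^ j) - q ^ k))"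
proof -
  have "{J. J \<subseteq> {0..<n} \<and> card J = n - 1} = (\<lambda>k. {..<n} - {k}) ` {..<n}"
  proof (intro equalityI subsetI)
    fix J assume "J \<in> {J. J \<subseteq> {0..<n} \<and> card J = n - 1}"
    then have J: "J \<subseteq> {..<n}" "card J = n - 1" by auto
    then have "card ({..<n} - J) = 1"
      using assms by (simp add: card_Diff_subset finite_subset)
    then obtain k where k: "{..<n} - J = {k}" by (auto simp: card_1_singleton_iff)
    with J(1) show "J \<in> (\<lambda>k. {..<n} - {k}) ` {..<n}" by (intro image_eqI[of _ _ k]) auto
  qed auto
  moreover have "inj_on (\<lambda>k. {..<n} - {k}) {..<n}"
    unfolding inj_on_def by blast
  ultimately show ?thesis
    unfolding sym_qpoly_def by (simp add: sum.reindex sum_diff1_nat)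
qed

lemma degree_trace_pos:
  assumes "q \<ge> 2" and "n \<ge> 2"
  shows "degree (\<Sum>j<n. monom (1::'k::field) (q ^ j)) > 0"
proof -
  have "coeff (\<Sum>j<n. monom (1::'k) (q ^ j)) q = (\<Sum>j<n. if j = 1 then 1 else 0)"
    unfolding coeff_sum coeff_monom
    using power_inject_exp[of q _ 1] assms(1) by (intro sum.cong) auto
  also have "\<dots> = 1"
    using assms(2) by simp
  finally have "q \<le> degree (\<Sum>j<n. monom (1::'k) (q ^ j))"
    by (intro le_degree) simp
  with assms(1) show ?thesis by simp
qed

lemma ff_iso_over_K_kummer_trace_norm:
  assumes "q \<ge> 2" and "n \<ge> 2"
  shows "ff_iso_over_K (kummer_curve (\<Sum>j<n. q ^ j) (sym_qpoly q n 1 :: 'k::{field,finite} poly))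
    (trace_norm_curve q n)"
proof -
  have "(\<Sum>j<n. q ^ j) > 0"
    using assms(2) by (intro sum_pos2[of _ 0]) auto
  then have "degree (monom (1::'k) (\<Sum>j<n. q ^ j)) > 0"
    by (simp add: degree_monom_eq)
  from ff_iso_over_K_swap[OF this degree_trace_pos[OF assms]] show ?thesis
    unfolding sym_qpoly_1 by (simp add: kummer_curve_def trace_norm_curve_def poly_y_monom poly_y_sum)
qed

lemma ff_iso_over_K_kummer_sym_pred:
  fixes q n :: nat
  assumes "n \<ge> 1"
  defines "D \<equiv> \<Sum>j<n. q ^ j"
  shows "ff_iso_over_K (kummer_curve D (sym_qpoly q n (n - 1) :: 'k::field poly))
    (kummer_curve D (sym_qpoly q n 1))"
proof -
  define t :: "'k poly" where "t = (\<Sum>j<n. monom 1 (q ^ j))"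
  define s :: "'k poly" where "s = (\<Sum>j<n. monom 1 (D - q ^ j))"
  have qD: "q ^ j \<le> D" if "j \<in> {..<n}" for j
    unfolding D_def using that by (intro member_le_sum) auto
  have ts: "poly (poly_y t) (inverse rf_x) = inverse rf_x ^ D * to_fract s"
    unfolding t_def s_def by (rule poly_poly_y_monoms_inverse_rf_x[OF qD])
  have "poly (poly_y s) (inverse rf_x)
      = inverse rf_x ^ D * to_fract (\<Sum>j<n. monom 1 (D - (D - q ^ j)))"
    unfolding s_def by (rule poly_poly_y_monoms_inverse_rf_x) simp
  also have "(\<Sum>j<n. monom 1 (D - (D - q ^ j))) = t"
    unfolding t_def using qD by (intro sum.cong) auto
  finally have "ff_iso_over_K (kummer_curve D s) (kummer_curve D t)"
    using ts by (rule ff_iso_over_K_kummer_inversion)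
  moreover have "sym_qpoly q n 1 = t" and "sym_qpoly q n (n - 1) = s"
    unfolding sym_qpoly_1 sym_qpoly_pred[OF assms(1)] by (simp_all add: t_def s_def D_def)
  ultimately show ?thesis by simp
qed

theorem corollary4p27:
  fixes q n d :: nat
  assumes "\<exists>p k. prime p \<and> k > 0 \<and> q = p ^ k"
    and "n \<ge> 2"
    and "card (UNIV :: 'k set) = q ^ n"
    and "d = (q ^ n - 1) div (q - 1)"
  shows "ff_iso_over_K (kummer_curve d (sym_qpoly q n 1 :: ('k::{field,finite}) poly)) (trace_norm_curve q n)
       \<and> ff_iso_over_K (kummer_curve d (sym_qpoly q n (n - 1) :: 'k poly)) (trace_norm_curve q n)"
proof -
  obtain p k where "prime p" "k > 0" "q = p ^ k"
    using assms(1) by blast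
  then have q: "q \<ge> 2"
    using prime_ge_2_nat[of p] self_le_power[of p k] by simp
  have d: "d = (\<Sum>j<n. q ^ j)"
    unfolding assms(4) by (rule sum_powers_eq_div[OF q])
  have "ff_iso_over_K (kummer_curve d (sym_qpoly q n 1 :: 'k poly)) (trace_norm_curve q n)"
    unfolding d by (rule ff_iso_over_K_kummer_trace_norm[OF q assms(2)])
  moreover have "ff_iso_over_K (kummer_curve d (sym_qpoly q n (n - 1) :: 'k poly))
      (kummer_curve d (sym_qpoly q n 1))"
    unfolding d using assms(2) by (intro ff_iso_over_K_kummer_sym_pred) simp
  ultimately show ?thesis
    using ff_iso_over_K_trans by blast
qed

end
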